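(* For every $r\in(0,\tfrac12]$ there exist a constant $C_r>0$ and infinitely many integers $N$ such that there is an ORN design on $N$ nodes that guarantees throughput $r$ and has maximum latency at most $C_r\,L^*(r,N)$.
   Context: Nodes are $[N]=\{1,\dots,N\}$. A connection schedule of size $N$ and period $T\ge1$ is a sequence of permutations $\pi_0,\dots,\pi_{T-1}$ of $[N]$; write $\pi_t=\pi_{t \bmod T}$ for all $t\in\mathbb Z$. Its virtual topology is the directed graph $G$ with vertex set $[N]\times\mathbb Z$ whose edges are the virtual edges $(i,t)\to(i,t+1)$ and the physical edges $(i,t)\to(\pi_t(i),t+1)$, for all $i\in[N]$, $t\in\mathbb Z$. The latency of a finite directed path in $G$ is its number of edges. For $a,b\in[N]$, $t\in\mathbb Z$, $\mathcal P(a,b,t)$ is the set of paths in $G$ from $(a,t)$ to some vertex $(b,t')$, and $\mathcal P$ is the set of all paths. A flow is a function $f:\mathcal P\to[0,\infty)$; the load on an edge $e$ is $F(f,e)=\sum_{P\ni e}f(P)$; $f$ is feasible if $F(f,e)\le 1$ for every physical edge $e$. An oblivious routing scheme $R$ assigns to each $(a,b,t)\in[N]\times[N]\times\mathbb Z$ a flow $R_{a,b,t}$ supported on $\mathcal P(a,b,t)$ with $\sum_P R_{a,b,t}(P)=1$, which is periodic: $R_{a,b,t+T}$ is obtained from $R_{a,b,t}$ by shifting every path by $T$ in the time coordinate. An ORN design on $N$ nodes is a connection schedule together with an oblivious routing scheme on its virtual topology; its maximum latency is the maximum latency of a path $P$ with $R_{a,b,t}(P)>0$ for some $a,b,t$.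 A demand function $D$ assigns to each $t\in\mathbb Z$ an $N\times N$ matrix $D(t)$ with nonnegative entries $D(t,a,b)$; it requests throughput equal to the supremum over $t$ of the maximum row sum or column sum of $D(t)$. The induced flow is $f(R,D)=\sum_{a,b,t}D(t,a,b)R_{a,b,t}$. The design guarantees throughput $r$ if $f(R,D)$ is feasible for every demand function $D$ requesting throughput at most $r$. For $r\in(0,\frac12]$, $(h,\varepsilon)$ denotes the unique solution in $\mathbb N\times(0,1]$ of $\frac1{2r}=h+1-\varepsilon$ (equivalently $h=\lfloor\frac1{2r}\rfloor$, $\varepsilon=h+1-\frac1{2r}$), and $L^*(r,N)=h\left(N^{1/(h+1)}+(\varepsilon N)^{1/h}\right)$. *)

theory Defs
  imports "HOL-Analysis.Analysis" "HOL-Combinatorics.Permutations"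
begin

text \<open>Nodes are 1..N. A connection schedule of period T is given by sigma 0, ..., sigma (T-1),
  each a permutation of {1..N}; it is extended periodically to all integer times.\<close>

definition schedule :: "nat \<Rightarrow> nat \<Rightarrow> (nat \<Rightarrow> nat \<Rightarrow> nat) \<Rightarrow> bool" where
  "schedule N T \<sigma> \<longleftrightarrow> T \<ge> 1 \<and> (\<forall>t<T. \<sigma> t permutes {1..N})"

definition perm_at :: "nat \<Rightarrow> (nat \<Rightarrow> nat \<Rightarrow> nat) \<Rightarrow> int \<Rightarrow> nat \<Rightarrow> nat" where
  "perm_at T \<sigma> t = \<sigma> (nat (t mod int T))"

text \<open>Edges of the virtual topology: (i, t, False) is the virtual edge (i,t) -> (i,t+1),
  (i, t, True) is the physical edge (i,t) -> (pi_t(i), t+1).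
  Since every vertex has exactly one outgoing virtual and one outgoing physical edge,
  a finite directed path is determined by its start vertex (a,t) and the list of the
  kinds of its edges.\<close>

type_synonym edge = "nat \<times> int \<times> bool"
type_synonym path = "nat \<times> int \<times> bool list"

fun step_edges :: "(int \<Rightarrow> nat \<Rightarrow> nat) \<Rightarrow> nat \<Rightarrow> int \<Rightarrow> bool list \<Rightarrow> edge list" where
  "step_edges p i t [] = []"
| "step_edges p i t (b # bs) = (i, t, b) # step_edges p (if b then p t i else i) (t + 1) bs"

fun step_end :: "(int \<Rightarrow> nat \<Rightarrow> nat) \<Rightarrow> nat \<Rightarrow> int \<Rightarrow> bool list \<Rightarrow> nat" where
  "step_end p i t [] = i"
| "step_end p i t (b # bs) = step_end p (if b then p t i else i) (t + 1) bs"

definition path_edges :: "nat \<Rightarrow> (nat \<Rightarrow> nat \<Rightarrow> nat) \<Rightarrow> path \<Rightarrow> edge set" where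
  "path_edges T \<sigma> P = (case P of (i, t, bs) \<Rightarrow> set (step_edges (perm_at T \<sigma>) i t bs))"

definition latency :: "path \<Rightarrow> nat" where
  "latency P = length (snd (snd P))"

definition paths_abt :: "nat \<Rightarrow> (nat \<Rightarrow> nat \<Rightarrow> nat) \<Rightarrow> nat \<Rightarrow> nat \<Rightarrow> int \<Rightarrow> path set" where
  "paths_abt T \<sigma> a b t = {(i, s, bs). i = a \<and> s = t \<and> step_end (perm_at T \<sigma>) a t bs = b}"

definition shift_path :: "int \<Rightarrow> path \<Rightarrow> path" where
  "shift_path d P = (case P of (i, s, bs) \<Rightarrow> (i, s + d, bs))"

definition routing_scheme ::
  "nat \<Rightarrow> nat \<Rightarrow> (nat \<Rightarrow> nat \<Rightarrow> nat) \<Rightarrow> (nat \<Rightarrow> nat \<Rightarrow> int \<Rightarrow> path \<Rightarrow> real) \<Rightarrow> bool" where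
  "routing_scheme N T \<sigma> R \<longleftrightarrow>
     (\<forall>a\<in>{1..N}. \<forall>b\<in>{1..N}. \<forall>t.
        (\<forall>P. R a b t P \<ge> 0)
      \<and> (\<forall>P. P \<notin> paths_abt T \<sigma> a b t \<longrightarrow> R a b t P = 0)
      \<and> (\<Sum>\<^sub>\<infinity>P\<in>UNIV. ennreal (R a b t P)) = 1
      \<and> (\<forall>P. R a b (t + int T) (shift_path (int T) P) = R a b t P))"

definition requests_at_most :: "nat \<Rightarrow> (int \<Rightarrow> nat \<Rightarrow> nat \<Rightarrow> real) \<Rightarrow> real \<Rightarrow> bool" where
  "requests_at_most N D r \<longleftrightarrow>
     (\<forall>t. \<forall>a\<in>{1..N}. \<forall>b\<in>{1..N}. D t a b \<ge> 0)
   \<and> (\<forall>t. \<forall>a\<in>{1..N}. (\<Sum>b\<in>{1..N}. D t a b) \<le> r)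
   \<and> (\<forall>t. \<forall>b\<in>{1..N}. (\<Sum>a\<in>{1..N}. D t a b) \<le> r)"

text \<open>Induced flow f(R,D) (as an extended nonnegative real, so no summability side
  condition is hidden) and its load on an edge.\<close>
definition induced_flow ::
  "nat \<Rightarrow> (nat \<Rightarrow> nat \<Rightarrow> int \<Rightarrow> path \<Rightarrow> real) \<Rightarrow> (int \<Rightarrow> nat \<Rightarrow> nat \<Rightarrow> real) \<Rightarrow> path \<Rightarrow> ennreal" where
  "induced_flow N R D P =
     (\<Sum>\<^sub>\<infinity>(a, b, t)\<in>{1..N} \<times> {1..N} \<times> (UNIV :: int set). ennreal (D t a b * R a b t P))"

definition load ::
  "nat \<Rightarrow> (nat \<Rightarrow> nat \<Rightarrow> nat) \<Rightarrow> nat \<Rightarrow> (nat \<Rightarrow> nat \<Rightarrow> int \<Rightarrow> path \<Rightarrow> real)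
     \<Rightarrow> (int \<Rightarrow> nat \<Rightarrow> nat \<Rightarrow> real) \<Rightarrow> edge \<Rightarrow> ennreal" where
  "load T \<sigma> N R D e = (\<Sum>\<^sub>\<infinity>P\<in>{P. e \<in> path_edges T \<sigma> P}. induced_flow N R D P)"

definition guarantees_throughput ::
  "nat \<Rightarrow> nat \<Rightarrow> (nat \<Rightarrow> nat \<Rightarrow> nat) \<Rightarrow> (nat \<Rightarrow> nat \<Rightarrow> int \<Rightarrow> path \<Rightarrow> real) \<Rightarrow> real \<Rightarrow> bool" where
  "guarantees_throughput N T \<sigma> R r \<longleftrightarrow>
     (\<forall>D. requests_at_most N D r \<longrightarrow>
        (\<forall>i\<in>{1..N}. \<forall>t::int. load T \<sigma> N R D (i, t, True) \<le> 1))"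

definition max_latency_le :: "nat \<Rightarrow> (nat \<Rightarrow> nat \<Rightarrow> int \<Rightarrow> path \<Rightarrow> real) \<Rightarrow> real \<Rightarrow> bool" where
  "max_latency_le N R L \<longleftrightarrow>
     (\<forall>a\<in>{1..N}. \<forall>b\<in>{1..N}. \<forall>t P. R a b t P > 0 \<longrightarrow> real (latency P) \<le> L)"

definition good_ORN :: "nat \<Rightarrow> real \<Rightarrow> real \<Rightarrow> bool" where
  "good_ORN N r L \<longleftrightarrow>
     (\<exists>T \<sigma> R. schedule N T \<sigma> \<and> routing_scheme N T \<sigma> R
        \<and> guarantees_throughput N T \<sigma> R r \<and> max_latency_le N R L)"

definition Lstar :: "real \<Rightarrow> nat \<Rightarrow> real" where
  "Lstar r N = (let h = real_of_int \<lfloor>1 / (2 * r)\<rfloor>; \<epsilon> = h + 1 - 1 / (2 * r) in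
     h * (real N powr (1 / (h + 1)) + (\<epsilon> * real N) powr (1 / h)))"

end

theory Submission
  imports Defs
begin

text \<open>Take \<open>N = m ^ h\<close> nodes, identified with the torus \<open>(\<int>/m)^h\<close>. The schedule has period
  \<open>h m\<close> and works in rounds of \<open>h\<close> slots: in slot \<open>h \<rho> + d\<close> every node is shifted by
  \<open>\<rho> mod m\<close> along coordinate \<open>d\<close>. So within any \<open>m\<close> consecutive rounds every coordinate can be
  moved by any prescribed amount by waiting for the right slot. A packet from \<open>a\<close> to \<open>b\<close>
  uses Valiant's two-phase routing: it picks a uniformly random shift \<open>v\<close>, moves by \<open>v\<close> during
  the next \<open>m\<close> rounds and by \<open>b - a - v\<close> during the \<open>m\<close> rounds after that; its latency is at
  most \<open>3 h m\<close>.

  A physical edge leaving \<open>x\<close> at time \<open>u\<close> is used by a hop of either phase only if the departure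
  time lies in a window of \<open>h m\<close> slots and the random coordinate equals the shift performed at
  \<open>u\<close>, which has probability \<open>1/m\<close>; moreover \<open>x\<close> determines the source (first phase) or the
  destination (second phase). As rows and columns of the demand sum to at most \<open>r\<close>, each phase
  loads the edge by at most \<open>h m r / m = h r\<close>, and \<open>2 h r \<le> 1\<close> for \<open>h = \<lfloor>1/(2r)\<rfloor>\<close>.
  Finally \<open>h m \<le> h (\<epsilon> N)^(1/h) / \<epsilon> \<le> L*(r,N) / \<epsilon>\<close>, so \<open>C = 3/\<epsilon>\<close> works.\<close>

lemma physical_edge_in_step_edges:
  assumes "(x, s, True) \<in> set (step_edges p i t bs)"
  shows "\<exists>j<length bs. s = t + int j \<and> bs ! j \<and> x = step_end p i t (take j bs)"
  using assms
proof (induction bs arbitrary: i t)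
  case (Cons b bs)
  show ?case
  proof (cases "(x, s, True) = (i, t, b)")
    case False
    then have "(x, s, True) \<in> set (step_edges p (if b then p t i else i) (t + 1) bs)"
      using Cons.prems by auto
    from Cons.IH[OF this] obtain j where "j < length bs" "s = t + 1 + int j" "bs ! j"
      "x = step_end p (if b then p t i else i) (t + 1) (take j bs)" by blast
    then show ?thesis by (intro exI[of _ "Suc j"]) auto
  qed (auto intro: exI[of _ 0])
qed simp

definition uniform_choice :: "'v set \<Rightarrow> ('v \<Rightarrow> 'p) \<Rightarrow> 'p \<Rightarrow> real" where
  "uniform_choice V p P = real (card {v\<in>V. p v = P}) / real (card V)"

lemma uniform_choice_eq_0:
  assumes "P \<notin> p ` V"
  shows "uniform_choice V p P = 0"
proof -
  have "{v\<in>V. p v = P} = {}"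
    using assms by auto
  then show ?thesis
    unfolding uniform_choice_def by (metis card.empty of_nat_0 div_0)
qed

lemma sum_uniform_choice:
  assumes "finite V" "finite S"
  shows "(\<Sum>P\<in>S. uniform_choice V p P) = real (card {v\<in>V. p v \<in> S}) / real (card V)"
proof -
  have "(\<Sum>P\<in>S. card {v\<in>V. p v = P}) = (\<Sum>P\<in>S. card {v\<in>{v\<in>V. p v \<in> S}. p v = P})"
    by (intro sum.cong arg_cong[where f = card]) auto
  also have "\<dots> = card {v\<in>V. p v \<in> S}"
    using sum.group[of "{v\<in>V. p v \<in> S}" S p "\<lambda>_. 1 :: nat"] assms by auto
  finally show ?thesis
    unfolding uniform_choice_def by (simp add: sum_divide_distrib[symmetric] flip: of_nat_sum)
qed

lemma infsum_uniform_choice: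
  assumes "finite V" "V \<noteq> {}"
  shows "(\<Sum>\<^sub>\<infinity>P\<in>UNIV. ennreal (uniform_choice V p P)) = 1"
proof -
  have "{v\<in>V. p v \<in> p ` V} = V"
    by auto
  then have total: "(\<Sum>P\<in>p ` V. uniform_choice V p P) = 1"
    using assms by (simp add: sum_uniform_choice card_gt_0_iff)
  have "(\<Sum>\<^sub>\<infinity>P\<in>UNIV. ennreal (uniform_choice V p P)) = (\<Sum>P\<in>p ` V. ennreal (uniform_choice V p P))"
    using assms(1) by (subst infsum_cong_neutral[where T = "p ` V"]) (auto simp: uniform_choice_eq_0)
  also have "\<dots> = ennreal (\<Sum>P\<in>p ` V. uniform_choice V p P)"
    by (intro sum_ennreal) (simp add: uniform_choice_def)
  finally show ?thesis
    unfolding total by simp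
qed

lemma induced_flow_eq_sum:
  assumes "finite W"
    and supp: "\<And>a b t. a \<in> {1..N} \<Longrightarrow> b \<in> {1..N} \<Longrightarrow> R a b t P \<noteq> 0 \<Longrightarrow> t \<in> W"
    and nonneg: "\<And>a b t. a \<in> {1..N} \<Longrightarrow> b \<in> {1..N} \<Longrightarrow> 0 \<le> D t a b * R a b t P"
  shows "induced_flow N R D P = ennreal (\<Sum>a\<in>{1..N}. \<Sum>b\<in>{1..N}. \<Sum>t\<in>W. D t a b * R a b t P)"
proof -
  let ?K = "{1..N} \<times> {1..N} \<times> W"
  have "induced_flow N R D P = (\<Sum>\<^sub>\<infinity>(a, b, t)\<in>?K. ennreal (D t a b * R a b t P))"
    unfolding induced_flow_def using supp by (intro infsum_cong_neutral) (auto, metis mult_zero_right ennreal_0)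
  also have "\<dots> = (\<Sum>(a, b, t)\<in>?K. ennreal (D t a b * R a b t P))"
    using assms(1) by simp
  also have "\<dots> = ennreal (\<Sum>(a, b, t)\<in>?K. D t a b * R a b t P)"
    using nonneg by (subst sum_ennreal[symmetric]) (auto intro!: sum.cong)
  finally show ?thesis by (simp add: sum.cartesian_product)
qed

lemma load_eq_sum:
  assumes "finite W" "finite F"
    and supp: "\<And>a b t P. a \<in> {1..N} \<Longrightarrow> b \<in> {1..N} \<Longrightarrow> e \<in> path_edges T \<sigma> P \<Longrightarrow>
      R a b t P \<noteq> 0 \<Longrightarrow> t \<in> W \<and> P \<in> F"
    and nonneg: "\<And>a b t P. a \<in> {1..N} \<Longrightarrow> b \<in> {1..N} \<Longrightarrow> 0 \<le> D t a b * R a b t P"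
  shows "load T \<sigma> N R D e = ennreal (\<Sum>a\<in>{1..N}. \<Sum>b\<in>{1..N}. \<Sum>t\<in>W.
           D t a b * (\<Sum>P\<in>{P\<in>F. e \<in> path_edges T \<sigma> P}. R a b t P))"
proof -
  let ?E = "{P. e \<in> path_edges T \<sigma> P}"
  let ?S = "\<lambda>P. \<Sum>a\<in>{1..N}. \<Sum>b\<in>{1..N}. \<Sum>t\<in>W. D t a b * R a b t P"
  have flow: "induced_flow N R D P = ennreal (?S P)" if "P \<in> ?E" for P
    using that supp nonneg by (intro induced_flow_eq_sum[OF assms(1)]) auto
  have vanish: "?S P = 0" if "P \<in> ?E" "P \<notin> F" for P
  proof -
    have "R a b t P = 0" if "a \<in> {1..N}" "b \<in> {1..N}" for a b t
      using supp[OF that] \<open>P \<in> ?E\<close> \<open>P \<notin> F\<close> by blast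
    then show ?thesis by simp
  qed
  have "load T \<sigma> N R D e = (\<Sum>\<^sub>\<infinity>P\<in>?E. ennreal (?S P))"
    unfolding load_def using flow by (intro infsum_cong) auto
  also have "\<dots> = (\<Sum>P\<in>{P\<in>F. e \<in> path_edges T \<sigma> P}. ennreal (?S P))"
    using assms(2) vanish by (subst infsum_cong_neutral[where T = "{P\<in>F. e \<in> path_edges T \<sigma> P}"]) auto
  also have "\<dots> = ennreal (\<Sum>P\<in>{P\<in>F. e \<in> path_edges T \<sigma> P}. ?S P)"
    using nonneg by (intro sum_ennreal) (auto intro!: sum_nonneg)
  finally show ?thesis
    by (simp add: sum_distrib_left sum.swap[where B = "{P\<in>F. e \<in> path_edges T \<sigma> P}"])
qed

lemma weighted_demand_le:
  assumes req: "requests_at_most N D r" and "finite W"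
    and G: "\<And>a b t. a \<in> {1..N} \<Longrightarrow> b \<in> {1..N} \<Longrightarrow> t \<in> W \<Longrightarrow> G a b t \<le> A t a + B t b"
    and A: "\<And>a t. 0 \<le> A t a" and B: "\<And>b t. 0 \<le> B t b"
  shows "(\<Sum>a\<in>{1..N}. \<Sum>b\<in>{1..N}. \<Sum>t\<in>W. D t a b * G a b t)
           \<le> r * ((\<Sum>t\<in>W. \<Sum>a\<in>{1..N}. A t a) + (\<Sum>t\<in>W. \<Sum>b\<in>{1..N}. B t b))"
proof -
  have D: "0 \<le> D t a b" if "a \<in> {1..N}" "b \<in> {1..N}" for a b t
    using req that unfolding requests_at_most_def by blast
  have row: "(\<Sum>b\<in>{1..N}. D t a b) \<le> r" if "a \<in> {1..N}" for a t
    using req that unfolding requests_at_most_def by blast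
  have col: "(\<Sum>a\<in>{1..N}. D t a b) \<le> r" if "b \<in> {1..N}" for b t
    using req that unfolding requests_at_most_def by blast
  have "(\<Sum>a\<in>{1..N}. \<Sum>b\<in>{1..N}. \<Sum>t\<in>W. D t a b * G a b t)
        \<le> (\<Sum>a\<in>{1..N}. \<Sum>b\<in>{1..N}. \<Sum>t\<in>W. D t a b * A t a + D t a b * B t b)"
    using D G by (intro sum_mono) (simp add: mult_left_mono flip: distrib_left)
  also have "\<dots> = (\<Sum>t\<in>W. \<Sum>a\<in>{1..N}. A t a * (\<Sum>b\<in>{1..N}. D t a b))
                 + (\<Sum>t\<in>W. \<Sum>b\<in>{1..N}. B t b * (\<Sum>a\<in>{1..N}. D t a b))"
    by (simp add: sum.distrib sum_distrib_left mult.commute sum.swap[where A = W]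
        sum.swap[where A = "{1..N}" and B = "{1..N}" and g = "\<lambda>a b. \<Sum>t\<in>W. B t b * D t a b"],
        rule sum.swap)
  also have "\<dots> \<le> (\<Sum>t\<in>W. \<Sum>a\<in>{1..N}. A t a * r) + (\<Sum>t\<in>W. \<Sum>b\<in>{1..N}. B t b * r)"
    using A B row col by (intro add_mono sum_mono mult_left_mono) auto
  also have "\<dots> = r * ((\<Sum>t\<in>W. \<Sum>a\<in>{1..N}. A t a) + (\<Sum>t\<in>W. \<Sum>b\<in>{1..N}. B t b))"
    by (simp add: sum_distrib_left distrib_left mult.commute)
  finally show ?thesis .
qed

lemma sum_card_unique_le:
  assumes "finite A" "finite V"
    and unique: "\<And>v a a'. v \<in> V \<Longrightarrow> a \<in> A \<Longrightarrow> a' \<in> A \<Longrightarrow> Q v a \<Longrightarrow> Q v a' \<Longrightarrow> a = a'"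
  shows "(\<Sum>a\<in>A. card {v\<in>V. Q v a}) \<le> card V"
proof -
  have "(\<Sum>a\<in>A. card {v\<in>V. Q v a}) = card (\<Union>a\<in>A. {v\<in>V. Q v a})"
    using assms unique by (intro card_UN_disjoint[symmetric]) auto
  also have "\<dots> \<le> card V"
    using assms(2) by (intro card_mono) auto
  finally show ?thesis .
qed

lemma sum_indicator_shift:
  fixes x :: "'a :: comm_monoid_add"
  assumes "t \<le> c"
  shows "(\<Sum>k<j. if t + int k = c then x else 0) = (if c < t + int j then x else 0)"
proof -
  have "(\<Sum>k<j. if t + int k = c then x else 0) = (\<Sum>k<j. if k = nat (c - t) then x else 0)"
    using assms by (intro sum.cong) auto
  then show ?thesis
    using assms by auto
qed

lemma mod_add_add_complements:
  fixes x y z m :: nat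
  assumes "x < m" "y < m" "z < m"
  shows "(x + (y + (z + (m - x) + (m - y)) mod m)) mod m = z"
proof -
  have "(x + (y + (z + (m - x) + (m - y)) mod m)) mod m = (x + y + (z + (m - x) + (m - y))) mod m"
    by (metis add.assoc mod_add_right_eq)
  also have "x + y + (z + (m - x) + (m - y)) = z + 2 * m"
    using assms by simp
  finally show ?thesis
    using assms by simp
qed

lemma mod_add_complement_twice:
  fixes c v m :: nat
  assumes "v < m"
  shows "(c + (m - (c + (m - v)) mod m)) mod m = v"
proof -
  let ?r = "(c + (m - v)) mod m"
  have r: "int ?r = (int c + int m - int v) mod int m"
    using assms by (simp add: of_nat_mod)
  have "?r \<le> m"
    using assms by (simp add: less_imp_le)
  then have "int ((c + (m - ?r)) mod m) = (int c + int m - int ?r) mod int m"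
    by (simp add: of_nat_mod)
  also have "\<dots> = (int c + int m - (int c + int m - int v)) mod int m"
    unfolding r by (rule mod_diff_right_eq)
  also have "\<dots> = int v"
    using assms by simp
  finally show ?thesis by simp
qed

lemma sum_card_swap:
  assumes "finite A" "finite B"
  shows "(\<Sum>a\<in>A. card {b\<in>B. R a b}) = (\<Sum>b\<in>B. card {a\<in>A. R a b})"
proof -
  have "card {b\<in>B. R a b} = (\<Sum>b\<in>B. if R a b then 1 else 0)" for a
    using assms(2) by (simp add: sum.inter_filter[symmetric])
  moreover have "card {a\<in>A. R a b} = (\<Sum>a\<in>A. if R a b then 1 else 0)" for b
    using assms(1) by (simp add: sum.inter_filter[symmetric])
  ultimately show ?thesis
    by (simp add: sum.swap[of _ A])
qed

locale torus =
  fixes h m :: nat and node :: "(nat \<Rightarrow> nat) \<Rightarrow> nat"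
  assumes h_pos: "0 < h" and m_pos: "0 < m"
    and node_bij: "bij_betw node (PiE {..<h} (\<lambda>_. {..<m})) {1..m ^ h}"
begin

abbreviation vectors :: "(nat \<Rightarrow> nat) set" where
  "vectors \<equiv> PiE {..<h} (\<lambda>_. {..<m})"

text \<open>A definition rather than an abbreviation: the simplifier would otherwise rewrite membership
  into arithmetic, and conditional rewrite rules with premise \<open>i \<in> nodes\<close> would stop firing.\<close>

definition nodes :: "nat set" where
  "nodes = {1..m ^ h}"

definition coord :: "nat \<Rightarrow> nat \<Rightarrow> nat" where
  "coord = inv_into vectors node"

lemma node_bij_nodes: "bij_betw node vectors nodes"
  unfolding nodes_def by (rule node_bij)

lemma finite_nodes: "finite nodes"
  unfolding nodes_def by simp

lemma coord_in_vectors: "i \<in> nodes \<Longrightarrow> coord i \<in> vectors"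
  unfolding coord_def using node_bij_nodes by (metis bij_betw_def inv_into_into)

lemma node_coord: "i \<in> nodes \<Longrightarrow> node (coord i) = i"
  unfolding coord_def using node_bij_nodes by (simp add: bij_betw_def f_inv_into_f)

lemma coord_node: "v \<in> vectors \<Longrightarrow> coord (node v) = v"
  unfolding coord_def using node_bij_nodes by (meson bij_betw_inv_into_left)

lemma node_in_nodes: "v \<in> vectors \<Longrightarrow> node v \<in> nodes"
  using node_bij_nodes by (rule bij_betw_apply)

lemma coord_less: "i \<in> nodes \<Longrightarrow> d < h \<Longrightarrow> coord i d < m"
  using coord_in_vectors by (auto simp: PiE_iff)

lemma vector_less: "v \<in> vectors \<Longrightarrow> d < h \<Longrightarrow> v d < m"
  by (auto simp: PiE_iff)

lemma finite_vectors: "finite vectors"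
  by (simp add: finite_PiE)

lemma card_vectors: "card vectors = m ^ h"
  by (simp add: card_PiE)

lemma node_eqI:
  assumes "i \<in> nodes" "j \<in> nodes" "\<And>d. d < h \<Longrightarrow> coord i d = coord j d"
  shows "i = j"
proof -
  have "coord i = coord j"
    using coord_in_vectors[OF assms(1)] coord_in_vectors[OF assms(2)] by (rule PiE_ext) (simp add: assms(3))
  then show ?thesis
    by (metis assms(1,2) node_coord)
qed

definition translate :: "(nat \<Rightarrow> nat) \<Rightarrow> nat \<Rightarrow> nat" where
  "translate c i = (if i \<in> nodes then node (\<lambda>d\<in>{..<h}. (coord i d + c d) mod m) else i)"

lemma translate_outside: "i \<notin> nodes \<Longrightarrow> translate c i = i"
  unfolding translate_def by (rule if_not_P)

lemma translate_in_nodes: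
  assumes "i \<in> nodes"
  shows "translate c i \<in> nodes"
proof -
  have "(\<lambda>d\<in>{..<h}. (coord i d + c d) mod m) \<in> vectors"
    using m_pos by (simp add: PiE_iff)
  then show ?thesis
    unfolding translate_def if_P[OF assms] by (rule node_in_nodes)
qed

lemma coord_translate:
  "i \<in> nodes \<Longrightarrow> d < h \<Longrightarrow> coord (translate c i) d = (coord i d + c d) mod m"
  unfolding translate_def using m_pos by (simp add: coord_node PiE_iff)

lemma translate_zero: "translate (\<lambda>_. 0) i = i"
proof (cases "i \<in> nodes")
  case True
  show ?thesis
    by (rule node_eqI) (simp_all add: True translate_in_nodes coord_translate coord_less)
qed (rule translate_outside)

lemma translate_translate:
  "translate c (translate c' i) = translate (\<lambda>d. c' d + c d) i"
proof (cases "i \<in> nodes")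
  case True
  show ?thesis
    by (rule node_eqI) (simp_all add: True translate_in_nodes coord_translate mod_add_left_eq add.assoc)
qed (simp add: translate_outside)

lemma translate_cong:
  assumes "\<And>d. d < h \<Longrightarrow> c d mod m = c' d mod m"
  shows "translate c i = translate c' i"
proof -
  have "(coord i d + c d) mod m = (coord i d + c' d) mod m" if "d < h" for d
    by (metis assms[OF that] mod_add_right_eq)
  then have "(\<lambda>d\<in>{..<h}. (coord i d + c d) mod m) = (\<lambda>d\<in>{..<h}. (coord i d + c' d) mod m)"
    by (intro restrict_ext) simp
  then show ?thesis
    unfolding translate_def by simp
qed

lemma translate_inverse: "translate (\<lambda>d. m - c d mod m) (translate c i) = i"
proof -
  have cancel: "(x + (m - x mod m)) mod m = 0" for x
  proof -
    have "(x + (m - x mod m)) mod m = (x mod m + (m - x mod m)) mod m"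
      by (simp add: mod_add_left_eq)
    also have "\<dots> = 0"
      using m_pos by (simp add: less_imp_le)
    finally show ?thesis .
  qed
  have "translate (\<lambda>d. m - c d mod m) (translate c i) = translate (\<lambda>_. 0) i"
    unfolding translate_translate by (rule translate_cong) (simp only: cancel mod_0)
  then show ?thesis
    unfolding translate_zero .
qed

lemma translate_permutes: "translate c permutes nodes"
proof (rule bij_imp_permutes)
  have inj: "inj_on (translate c) nodes"
    by (rule inj_on_inverseI[where g = "translate (\<lambda>d. m - c d mod m)"]) (rule translate_inverse)
  moreover have "translate c ` nodes = nodes"
    using inj translate_in_nodes by (intro endo_inj_surj) (auto simp: finite_nodes)
  ultimately show "bij_betw (translate c) nodes nodes"
    by (simp add: bij_betw_def)
qed (rule translate_outside)

lemma translate_inj: "translate c i = translate c j \<Longrightarrow> i = j"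
  by (rule injD[OF permutes_inj[OF translate_permutes]])

definition dim :: "int \<Rightarrow> nat" where
  "dim s = nat (s mod int h)"

definition amount :: "int \<Rightarrow> nat" where
  "amount s = nat (s div int h mod int m)"

definition hop :: "int \<Rightarrow> nat \<Rightarrow> nat" where
  "hop s d = (if d = dim s then amount s else 0)"

definition schedule_perm :: "nat \<Rightarrow> nat \<Rightarrow> nat" where
  "schedule_perm k = translate (hop (int k))"

lemma dim_less: "dim s < h"
  using h_pos unfolding dim_def by (simp add: nat_less_iff)

lemma amount_less: "amount s < m"
  using m_pos unfolding amount_def by (simp add: nat_less_iff)

lemma hop_mod_period: "hop (t mod int (h * m)) = hop t"
proof -
  have "t mod int (h * m) mod int h = t mod int h"
    by (simp add: mod_mod_cancel)
  moreover have "t mod int (h * m) div int h mod int m = t div int h mod int m"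
    using h_pos by (simp add: zmod_zmult2_eq div_mult2_eq' mod_mult2_eq)
  ultimately show ?thesis
    unfolding hop_def dim_def amount_def by (simp only:)
qed

lemma perm_at_schedule_perm: "perm_at (h * m) schedule_perm = (\<lambda>t. translate (hop t))"
proof
  fix t
  show "perm_at (h * m) schedule_perm t = translate (hop t)"
    using h_pos m_pos hop_mod_period[of t] unfolding perm_at_def schedule_perm_def by simp
qed

lemma schedule_schedule_perm: "schedule (m ^ h) (h * m) schedule_perm"
  using h_pos m_pos translate_permutes unfolding schedule_def schedule_perm_def nodes_def
  by (simp add: Suc_leI)

definition displacement :: "int \<Rightarrow> bool list \<Rightarrow> nat \<Rightarrow> nat" where
  "displacement t bs d = (\<Sum>k<length bs. if bs ! k then hop (t + int k) d else 0)"

lemma displacement_Cons: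
  "displacement t (b # bs) d = (if b then hop t d else 0) + displacement (t + 1) bs d"
  unfolding displacement_def
  by (simp add: sum.lessThan_Suc_shift del: sum.lessThan_Suc) (auto intro!: sum.cong simp: algebra_simps)

lemma step_end_schedule:
  "step_end (\<lambda>s. translate (hop s)) i t bs = translate (displacement t bs) i"
proof (induction bs arbitrary: i t)
  case Nil
  show ?case
    by (simp add: displacement_def translate_zero)
next
  case (Cons b bs)
  have "(if b then translate (hop t) i else i) = translate (\<lambda>d. if b then hop t d else 0) i"
    by (simp add: translate_zero)
  then show ?case
    using Cons.IH by (simp add: translate_translate displacement_Cons)
qed

definition next_round :: "int \<Rightarrow> int" where
  "next_round t = t div int h + 1"

text \<open>Phase \<open>k\<close> of a route departing at \<open>t\<close> uses the \<open>m\<close> rounds starting with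
  \<open>next_round t + k m\<close>; coordinate \<open>d\<close> is shifted by \<open>v d\<close> in the unique one of them whose amount
  is \<open>v d\<close>.\<close>

definition hop_round :: "nat \<Rightarrow> int \<Rightarrow> (nat \<Rightarrow> nat) \<Rightarrow> nat \<Rightarrow> int" where
  "hop_round k t v d = next_round t + int (k * m) + (int (v d) - next_round t - int (k * m)) mod int m"

definition hop_time :: "nat \<Rightarrow> int \<Rightarrow> (nat \<Rightarrow> nat) \<Rightarrow> nat \<Rightarrow> int" where
  "hop_time k t v d = int h * hop_round k t v d + int d"

lemma next_round_bounds: "t < int h * next_round t" "int h * next_round t \<le> t + int h"
proof -
  have "t = int h * (t div int h) + t mod int h" "0 \<le> t mod int h" "t mod int h < int h"
    using h_pos by simp_all
  then show "t < int h * next_round t" "int h * next_round t \<le> t + int h"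
    unfolding next_round_def distrib_left mult_1_right by linarith+
qed

lemma next_round_period: "next_round (t + int (h * m)) = next_round t + int m"
  using h_pos unfolding next_round_def by simp

lemma hop_round_bounds:
  "next_round t + int (k * m) \<le> hop_round k t v d"
  "hop_round k t v d < next_round t + int (Suc k * m)"
  using m_pos unfolding hop_round_def by simp_all

lemma hop_time_div: "d < h \<Longrightarrow> hop_time k t v d div int h = hop_round k t v d"
  unfolding hop_time_def by simp

lemma dim_hop_time: "d < h \<Longrightarrow> dim (hop_time k t v d) = d"
  unfolding hop_time_def dim_def by simp

lemma amount_hop_time: "d < h \<Longrightarrow> v d < m \<Longrightarrow> amount (hop_time k t v d) = v d"
  unfolding amount_def hop_time_div hop_round_def by (simp add: mod_add_right_eq)

lemma hop_time_bounds:
  assumes "d < h"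
  shows "int h * (next_round t + int (k * m)) \<le> hop_time k t v d"
    and "hop_time k t v d < int h * (next_round t + int (Suc k * m))"
proof -
  have "int h * (next_round t + int (k * m)) \<le> int h * hop_round k t v d"
    and "int h * hop_round k t v d \<le> int h * (next_round t + int (Suc k * m) - 1)"
    using hop_round_bounds by (simp_all add: mult_left_mono)
  then show "int h * (next_round t + int (k * m)) \<le> hop_time k t v d"
    and "hop_time k t v d < int h * (next_round t + int (Suc k * m))"
    using assms unfolding hop_time_def by (simp_all add: algebra_simps)
qed

lemma hop_time_after:
  assumes "d < h"
  shows "t < hop_time k t v d"
proof -
  have "0 \<le> int h * int (k * m)"
    by simp
  then show ?thesis
    using hop_time_bounds(1)[OF assms, where t = t and k = k and v = v] next_round_bounds(1)[of t]
    unfolding distrib_left by linarith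
qed

lemma hop_time_phases: "d < h \<Longrightarrow> d' < h \<Longrightarrow> hop_time 0 t v d < hop_time 1 t w d'"
  using hop_time_bounds(2)[where k = 0 and t = t and v = v and d = d]
    hop_time_bounds(1)[where k = 1 and t = t and v = w and d = d'] by simp

lemma hop_time_period: "hop_time k (t + int (h * m)) v d = hop_time k t v d + int (h * m)"
proof -
  have "(int (v d) - (next_round t + int m) - int (k * m)) mod int m
      = (int (v d) - next_round t - int (k * m)) mod int m"
    using minus_mod_self2[of "int (v d) - next_round t - int (k * m)" "int m"] by (simp add: algebra_simps)
  then have "hop_round k (t + int (h * m)) v d = hop_round k t v d + int m"
    unfolding hop_round_def next_round_period by simp
  then show ?thesis
    unfolding hop_time_def by (simp add: algebra_simps)
qed

lemma hop_time_window:
  assumes "u = hop_time k t v (dim u)"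
  shows "t \<in> {int h * (u div int h - int (Suc k * m)) ..< int h * (u div int h - int (k * m))}"
proof -
  have "hop_round k t v (dim u) = u div int h"
    using assms hop_time_div[OF dim_less] by metis
  then have "u div int h - int (Suc k * m) \<le> t div int h" "t div int h + 1 \<le> u div int h - int (k * m)"
    using hop_round_bounds[where t = t and k = k and v = v and d = "dim u"]
    unfolding next_round_def by simp_all
  then have "int h * (u div int h - int (Suc k * m)) \<le> int h * (t div int h)"
    and "int h * (t div int h + 1) \<le> int h * (u div int h - int (k * m))"
    by (simp_all add: mult_left_mono)
  moreover have "t = int h * (t div int h) + t mod int h" "0 \<le> t mod int h" "t mod int h < int h"
    using h_pos by simp_all
  ultimately show ?thesis
    unfolding distrib_left mult_1_right atLeastLessThan_iff by linarith
qed

lemma card_hop_time_preimage: "card {t\<in>W. u = hop_time k t v (dim u)} \<le> h * m"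
proof -
  have "card {t\<in>W. u = hop_time k t v (dim u)}
      \<le> card {int h * (u div int h - int (Suc k * m)) ..< int h * (u div int h - int (k * m))}"
    using hop_time_window by (intro card_mono) auto
  also have "\<dots> = h * m"
    by (simp add: algebra_simps nat_mult_distrib)
  finally show ?thesis .
qed

definition route_len :: "int \<Rightarrow> nat" where
  "route_len t = nat (int h * (next_round t + 2 * int m) - t)"

definition hop_times :: "int \<Rightarrow> (nat \<Rightarrow> nat) \<Rightarrow> (nat \<Rightarrow> nat) \<Rightarrow> int set" where
  "hop_times t v w = hop_time 0 t v ` {..<h} \<union> hop_time 1 t w ` {..<h}"

definition route_bits :: "int \<Rightarrow> (nat \<Rightarrow> nat) \<Rightarrow> (nat \<Rightarrow> nat) \<Rightarrow> bool list" where
  "route_bits t v w = map (\<lambda>j. t + int j \<in> hop_times t v w) [0..<route_len t]"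

text \<open>The vector \<open>b - a - v\<close> modulo \<open>m\<close>, written without truncated subtraction.\<close>

definition correction :: "nat \<Rightarrow> nat \<Rightarrow> (nat \<Rightarrow> nat) \<Rightarrow> nat \<Rightarrow> nat" where
  "correction a b v = (\<lambda>d\<in>{..<h}. (coord b d + (m - coord a d) + (m - v d)) mod m)"

definition route :: "nat \<Rightarrow> nat \<Rightarrow> int \<Rightarrow> (nat \<Rightarrow> nat) \<Rightarrow> path" where
  "route a b t v = (a, t, route_bits t v (correction a b v))"

lemma int_route_len: "int (route_len t) = int h * (next_round t + 2 * int m) - t"
proof -
  have "0 \<le> int h * (2 * int m)"
    by simp
  then have "t \<le> int h * (next_round t + 2 * int m)"
    using next_round_bounds(1)[of t] unfolding distrib_left by linarith
  then show ?thesis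
    unfolding route_len_def by simp
qed

lemma route_len_le: "route_len t \<le> 3 * h * m"
proof -
  have "int h * 1 \<le> int h * int m"
    using m_pos by (intro mult_left_mono) simp_all
  then have "int (route_len t) \<le> int (3 * h * m)"
    using next_round_bounds(2)[of t] unfolding int_route_len by (simp add: algebra_simps)
  then show ?thesis
    by linarith
qed

lemma hop_time_before_end:
  assumes "d < h" "k \<le> 1"
  shows "hop_time k t v d < t + int (route_len t)"
proof -
  have "int (Suc k * m) \<le> 2 * int m"
    using assms(2) by (cases k) auto
  then have "int h * (next_round t + int (Suc k * m)) \<le> int h * (next_round t + 2 * int m)"
    by (intro mult_left_mono) simp_all
  then show ?thesis
    using hop_time_bounds(2)[OF assms(1), where t = t and k = k and v = v] int_route_len[of t] by linarith
qed

lemma correction_in_vectors: "correction a b v \<in> vectors"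
  using m_pos unfolding correction_def by (simp add: PiE_iff)

lemma correction_correction:
  assumes "v \<in> vectors"
  shows "correction a b (correction a b v) = v"
proof (rule PiE_ext[OF correction_in_vectors assms])
  fix d assume "d \<in> {..<h}"
  then show "correction a b (correction a b v) d = v d"
    using mod_add_complement_twice[OF vector_less[OF assms], of d "coord b d + (m - coord a d)"]
    unfolding correction_def by (simp add: add.assoc)
qed

lemma card_correction:
  "card {v\<in>vectors. P (correction a b v)} = card {w\<in>vectors. P w}"
proof (rule bij_betw_same_card)
  show "bij_betw (correction a b) {v\<in>vectors. P (correction a b v)} {w\<in>vectors. P w}"
    using correction_correction correction_in_vectors
    by (intro bij_betw_byWitness[where f' = "correction a b"]) (simp_all add: image_subset_iff)
qed

lemma translate_correction:
  assumes "a \<in> nodes" "b \<in> nodes" "v \<in> vectors"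
  shows "translate (\<lambda>d. v d + correction a b v d) a = b"
proof (rule node_eqI[OF translate_in_nodes[OF assms(1)] assms(2)])
  fix d assume "d < h"
  then show "coord (translate (\<lambda>d. v d + correction a b v d) a) d = coord b d"
    using mod_add_add_complements[OF coord_less[OF assms(1)] vector_less[OF assms(3)] coord_less[OF assms(2)]]
    by (simp add: coord_translate assms correction_def add.assoc)
qed

lemma hop_summand:
  assumes "v \<in> vectors" "w \<in> vectors" "d < h"
  shows "(if s \<in> hop_times t v w then hop s d else 0)
       = (if s = hop_time 0 t v d then v d else 0) + (if s = hop_time 1 t w d then w d else 0)"
proof (cases "s \<in> hop_times t v w")
  case False
  then show ?thesis
    using assms(3) unfolding hop_times_def by auto
next
  case True
  then obtain d' where d': "d' < h" and s: "s = hop_time 0 t v d' \<or> s = hop_time 1 t w d'"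
    unfolding hop_times_def by auto
  have "hop_time 0 t v d \<noteq> hop_time 1 t w d'" "hop_time 0 t v d' \<noteq> hop_time 1 t w d"
    using hop_time_phases assms(3) d' by (metis less_irrefl)+
  moreover have "s = hop_time k t u d \<Longrightarrow> d' = d" if "s = hop_time k' t u' d'" for k k' u u'
    using that dim_hop_time[OF assms(3)] dim_hop_time[OF d'] by metis
  ultimately show ?thesis
    using s True d' assms by (auto simp: hop_def dim_hop_time amount_hop_time vector_less)
qed

lemma displacement_route_bits:
  assumes "v \<in> vectors" "w \<in> vectors" "j \<le> route_len t" "d < h"
  shows "displacement t (take j (route_bits t v w)) d
       = (if hop_time 0 t v d < t + int j then v d else 0) + (if hop_time 1 t w d < t + int j then w d else 0)"
proof -
  have "displacement t (take j (route_bits t v w)) d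
      = (\<Sum>k<j. if t + int k \<in> hop_times t v w then hop (t + int k) d else 0)"
    unfolding displacement_def route_bits_def using assms(3) by (intro sum.cong) auto
  also have "\<dots> = (\<Sum>k<j. (if t + int k = hop_time 0 t v d then v d else 0)
                         + (if t + int k = hop_time 1 t w d then w d else 0))"
    using hop_summand[OF assms(1,2,4)] by simp
  also have "\<dots> = (if hop_time 0 t v d < t + int j then v d else 0)
                 + (if hop_time 1 t w d < t + int j then w d else 0)"
    using hop_time_after[OF assms(4)] by (simp add: sum.distrib sum_indicator_shift less_imp_le)
  finally show ?thesis .
qed

lemma step_end_route:
  assumes "a \<in> nodes" "b \<in> nodes" "v \<in> vectors"
  shows "step_end (\<lambda>s. translate (hop s)) a t (route_bits t v (correction a b v)) = b"
proof -
  let ?w = "correction a b v"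
  have "displacement t (take (route_len t) (route_bits t v ?w)) d = v d + ?w d" if "d < h" for d
    using displacement_route_bits[OF assms(3) correction_in_vectors order_refl that]
      hop_time_before_end[OF that] by simp
  then have "translate (displacement t (route_bits t v ?w)) a = translate (\<lambda>d. v d + ?w d) a"
    by (intro translate_cong) (simp add: route_bits_def)
  then show ?thesis
    using translate_correction[OF assms] by (simp add: step_end_schedule)
qed

lemma route_bits_edge:
  assumes "v \<in> vectors" "w \<in> vectors"
    and "(x, u, True) \<in> set (step_edges (\<lambda>s. translate (hop s)) a t (route_bits t v w))"
  shows "u \<in> hop_times t v w"
    and "x = translate (\<lambda>d. (if hop_time 0 t v d < u then v d else 0)
                           + (if hop_time 1 t w d < u then w d else 0)) a"
proof -
  from physical_edge_in_step_edges[OF assms(3)] obtain j where j: "j < route_len t"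
    and u: "u = t + int j" and bit: "route_bits t v w ! j"
    and x: "x = translate (displacement t (take j (route_bits t v w))) a"
    by (auto simp: step_end_schedule route_bits_def)
  show "u \<in> hop_times t v w"
    using bit j u unfolding route_bits_def by simp
  show "x = translate (\<lambda>d. (if hop_time 0 t v d < u then v d else 0)
                           + (if hop_time 1 t w d < u then w d else 0)) a"
    unfolding x u using displacement_route_bits[OF assms(1,2) less_imp_le[OF j]]
    by (intro translate_cong) simp
qed

lemma route_edge:
  assumes "a \<in> nodes" "b \<in> nodes" "v \<in> vectors"
    and "(x, u, True) \<in> path_edges (h * m) schedule_perm (route a b t v)"
  shows "u = hop_time 0 t v (dim u) \<and> translate (\<lambda>d. if hop_time 0 t v d < u then v d else 0) a = x
     \<or> u = hop_time 1 t (correction a b v) (dim u)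
       \<and> translate (\<lambda>d. if hop_time 1 t (correction a b v) d < u then 0 else correction a b v d) x = b"
proof -
  define w where "w = correction a b v"
  have w: "w \<in> vectors"
    unfolding w_def by (rule correction_in_vectors)
  have edge: "(x, u, True) \<in> set (step_edges (\<lambda>s. translate (hop s)) a t (route_bits t v w))"
    using assms(4) unfolding path_edges_def route_def perm_at_schedule_perm w_def by simp
  note x = route_bits_edge(2)[OF assms(3) w edge]
  from route_bits_edge(1)[OF assms(3) w edge]
  obtain d0 where d0: "d0 < h" and phase: "u = hop_time 0 t v d0 \<or> u = hop_time 1 t w d0"
    unfolding hop_times_def by auto
  from phase show ?thesis
  proof
    assume u0: "u = hop_time 0 t v d0"
    have "\<not> hop_time 1 t w d < u" if "d < h" for d
      using hop_time_phases[OF d0 that, where t = t and v = v and w = w] u0 by simp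
    then have "x = translate (\<lambda>d. if hop_time 0 t v d < u then v d else 0) a"
      unfolding x by (intro translate_cong) simp
    then show ?thesis
      using u0 dim_hop_time[OF d0] by simp
  next
    assume u1: "u = hop_time 1 t w d0"
    have "hop_time 0 t v d < u" if "d < h" for d
      using hop_time_phases[OF that d0, where t = t and v = v and w = w] u1 by simp
    then have "translate (\<lambda>d. if hop_time 1 t w d < u then 0 else w d) x
      = translate (\<lambda>d. v d + (if hop_time 1 t w d < u then w d else 0) + (if hop_time 1 t w d < u then 0 else w d)) a"
      unfolding x translate_translate by (intro translate_cong) simp
    also have "\<dots> = translate (\<lambda>d. v d + w d) a"
      by (intro arg_cong[where f = "\<lambda>c. translate c a"]) auto
    finally show ?thesis
      using u1 dim_hop_time[OF d0] translate_correction[OF assms(1-3)] unfolding w_def by simp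
  qed
qed

lemma route_period: "route a b (t + int (h * m)) v = shift_path (int (h * m)) (route a b t v)"
proof -
  have "route_len (t + int (h * m)) = route_len t"
    unfolding route_len_def next_round_period by (simp add: algebra_simps)
  moreover have "hop_times (t + int (h * m)) v w = (\<lambda>s. s + int (h * m)) ` hop_times t v w" for w
    unfolding hop_times_def hop_time_period by auto
  ultimately have "route_bits (t + int (h * m)) v w = route_bits t v w" for w
    unfolding route_bits_def by (auto simp: algebra_simps)
  then show ?thesis
    unfolding route_def shift_path_def by simp
qed

lemma route_in_paths:
  "a \<in> nodes \<Longrightarrow> b \<in> nodes \<Longrightarrow> v \<in> vectors \<Longrightarrow> route a b t v \<in> paths_abt (h * m) schedule_perm a b t"
  unfolding paths_abt_def route_def perm_at_schedule_perm by (simp add: step_end_route)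

definition routing :: "nat \<Rightarrow> nat \<Rightarrow> int \<Rightarrow> path \<Rightarrow> real" where
  "routing a b t = uniform_choice vectors (route a b t)"

lemma routing_nonzero:
  assumes "routing a b t P \<noteq> 0"
  obtains v where "v \<in> vectors" "P = route a b t v"
proof -
  have "P \<in> route a b t ` vectors"
    using assms uniform_choice_eq_0 unfolding routing_def by metis
  then show ?thesis
    using that by blast
qed

lemma routing_scheme_routing: "routing_scheme (m ^ h) (h * m) schedule_perm routing"
  unfolding routing_scheme_def
proof (intro ballI allI conjI impI)
  fix a b t P
  assume ab: "a \<in> {1..m ^ h}" "b \<in> {1..m ^ h}"
  show "0 \<le> routing a b t P"
    unfolding routing_def uniform_choice_def by simp
  show "routing a b t P = 0" if "P \<notin> paths_abt (h * m) schedule_perm a b t"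
    using that route_in_paths ab routing_nonzero unfolding nodes_def by metis
  have "(\<lambda>_\<in>{..<h}. 0) \<in> vectors"
    using m_pos by simp
  then show "(\<Sum>\<^sub>\<infinity>P\<in>UNIV. ennreal (routing a b t P)) = 1"
    unfolding routing_def by (intro infsum_uniform_choice finite_vectors) blast
  have "shift_path (int (h * m)) Q = shift_path (int (h * m)) P \<longleftrightarrow> Q = P" for Q
    unfolding shift_path_def by (auto split: prod.splits)
  then show "routing a b (t + int (h * m)) (shift_path (int (h * m)) P) = routing a b t P"
    unfolding routing_def uniform_choice_def route_period by simp
qed

lemma max_latency_routing: "max_latency_le (m ^ h) routing (real (3 * h * m))"
  unfolding max_latency_le_def
proof (intro ballI allI impI)
  fix a b t P
  assume "0 < routing a b t P"
  then have "routing a b t P \<noteq> 0"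
    by simp
  then obtain v where "v \<in> vectors" "P = route a b t v"
    by (rule routing_nonzero)
  then have "latency P = route_len t"
    unfolding latency_def route_def route_bits_def by simp
  then show "real (latency P) \<le> real (3 * h * m)"
    using route_len_le[of t] by (simp only: of_nat_le_iff)
qed

lemma card_vectors_fixed:
  assumes "d < h" "j < m"
  shows "card {v\<in>vectors. v d = j} = m ^ (h - 1)"
proof -
  have "v \<in> PiE {..<h} (\<lambda>i. if i = d then {j} else {..<m}) \<longleftrightarrow> v \<in> vectors \<and> v d = j" for v
    using assms unfolding PiE_iff by (metis lessThan_iff singletonD singletonI)
  then have "{v\<in>vectors. v d = j} = PiE {..<h} (\<lambda>i. if i = d then {j} else {..<m})"
    by blast
  then have "card {v\<in>vectors. v d = j} = (\<Prod>i<h. card (if i = d then {j} else {..<m}))"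
    by (simp add: card_PiE)
  also have "\<dots> = (\<Prod>i<h. if i = d then 1 else m)"
    by (intro prod.cong) simp_all
  also have "\<dots> = (\<Prod>i\<in>{..<h} - {d}. m)"
    using assms(1) by (subst prod.remove[of _ d]) auto
  also have "\<dots> = m ^ (h - 1)"
    using assms(1) by simp
  finally show ?thesis .
qed

lemma card_departures_le:
  assumes "v \<in> vectors"
  shows "card {t\<in>W. u = hop_time k t v (dim u)} \<le> (if v (dim u) = amount u then h * m else 0)"
proof (cases "v (dim u) = amount u")
  case True
  then show ?thesis
    using card_hop_time_preimage by simp
next
  case False
  have "v (dim u) = amount u" if "u = hop_time k t v (dim u)" for t
    using that amount_hop_time[where d = "dim u" and v = v and k = k and t = t]
      dim_less[of u] vector_less[OF assms dim_less[of u]] by simp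
  then have "{t\<in>W. u = hop_time k t v (dim u)} = {}"
    using False by blast
  then show ?thesis
    unfolding if_not_P[OF False] by (simp only: card.empty le_refl)
qed

lemma sum_phase_count_le:
  assumes "finite W"
    and unique: "\<And>t v a a'. v \<in> vectors \<Longrightarrow> a \<in> nodes \<Longrightarrow> a' \<in> nodes \<Longrightarrow> Q t v a \<Longrightarrow> Q t v a' \<Longrightarrow> a = a'"
  shows "(\<Sum>t\<in>W. \<Sum>a\<in>nodes. card {v\<in>vectors. u = hop_time k t v (dim u) \<and> Q t v a}) \<le> h * m ^ h"
proof -
  let ?H = "\<lambda>t v. u = hop_time k t v (dim u)"
  have "(\<Sum>t\<in>W. \<Sum>a\<in>nodes. card {v\<in>vectors. ?H t v \<and> Q t v a}) \<le> (\<Sum>t\<in>W. card {v\<in>vectors. ?H t v})"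
  proof (rule sum_mono)
    fix t
    have "(\<Sum>a\<in>nodes. card {v\<in>{v\<in>vectors. ?H t v}. Q t v a}) \<le> card {v\<in>vectors. ?H t v}"
      by (rule sum_card_unique_le[OF finite_nodes]) (simp add: finite_vectors, use unique in blast)
    moreover have "{v\<in>{v\<in>vectors. ?H t v}. Q t v a} = {v\<in>vectors. ?H t v \<and> Q t v a}" for a
      by blast
    ultimately show "(\<Sum>a\<in>nodes. card {v\<in>vectors. ?H t v \<and> Q t v a}) \<le> card {v\<in>vectors. ?H t v}"
      by simp
  qed
  also have "\<dots> = (\<Sum>v\<in>vectors. card {t\<in>W. ?H t v})"
    using assms(1) finite_vectors by (rule sum_card_swap)
  also have "\<dots> \<le> (\<Sum>v\<in>vectors. if v (dim u) = amount u then h * m else 0)"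
    by (intro sum_mono card_departures_le)
  also have "\<dots> = h * m * card {v\<in>vectors. v (dim u) = amount u}"
    using finite_vectors by (simp add: sum.If_cases Int_def)
  also have "\<dots> = h * m ^ h"
    using h_pos by (simp add: card_vectors_fixed dim_less amount_less power_eq_if)
  finally show ?thesis .
qed

text \<open>During the first phase the current node is the source shifted by the hops already made,
  during the second it is the destination shifted back by the hops still to come. So the tail
  \<open>x\<close> of the edge determines the source resp.\ the destination.\<close>

definition first_phase_count :: "nat \<Rightarrow> int \<Rightarrow> int \<Rightarrow> nat \<Rightarrow> nat" where
  "first_phase_count x u t a = card {v\<in>vectors. u = hop_time 0 t v (dim u)
     \<and> translate (\<lambda>d. if hop_time 0 t v d < u then v d else 0) a = x}"

definition second_phase_count :: "nat \<Rightarrow> int \<Rightarrow> int \<Rightarrow> nat \<Rightarrow> nat" where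
  "second_phase_count x u t b = card {w\<in>vectors. u = hop_time 1 t w (dim u)
     \<and> translate (\<lambda>d. if hop_time 1 t w d < u then 0 else w d) x = b}"

lemma card_route_edge_le:
  assumes "a \<in> nodes" "b \<in> nodes"
  shows "card {v\<in>vectors. (x, u, True) \<in> path_edges (h * m) schedule_perm (route a b t v)}
       \<le> first_phase_count x u t a + second_phase_count x u t b"
proof -
  let ?P0 = "\<lambda>v. u = hop_time 0 t v (dim u) \<and> translate (\<lambda>d. if hop_time 0 t v d < u then v d else 0) a = x"
  let ?P1 = "\<lambda>w. u = hop_time 1 t w (dim u) \<and> translate (\<lambda>d. if hop_time 1 t w d < u then 0 else w d) x = b"
  have "{v\<in>vectors. (x, u, True) \<in> path_edges (h * m) schedule_perm (route a b t v)}
      \<subseteq> {v\<in>vectors. ?P0 v} \<union> {v\<in>vectors. ?P1 (correction a b v)}"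
  proof (rule subsetI)
    fix v
    assume "v \<in> {v\<in>vectors. (x, u, True) \<in> path_edges (h * m) schedule_perm (route a b t v)}"
    then have v: "v \<in> vectors" and e: "(x, u, True) \<in> path_edges (h * m) schedule_perm (route a b t v)"
      by simp_all
    from route_edge[OF assms v e] show "v \<in> {v\<in>vectors. ?P0 v} \<union> {v\<in>vectors. ?P1 (correction a b v)}"
      using v by (simp only: Un_iff mem_Collect_eq simp_thms)
  qed
  then have "card {v\<in>vectors. (x, u, True) \<in> path_edges (h * m) schedule_perm (route a b t v)}
      \<le> card ({v\<in>vectors. ?P0 v} \<union> {v\<in>vectors. ?P1 (correction a b v)})"
    by (rule card_mono[rotated]) (simp add: finite_vectors)
  also have "\<dots> \<le> card {v\<in>vectors. ?P0 v} + card {v\<in>vectors. ?P1 (correction a b v)}"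
    by (rule card_Un_le)
  also have "card {v\<in>vectors. ?P1 (correction a b v)} = card {w\<in>vectors. ?P1 w}"
    by (rule card_correction)
  finally show ?thesis
    unfolding first_phase_count_def second_phase_count_def .
qed

lemma sum_first_phase_count:
  assumes "finite W"
  shows "(\<Sum>t\<in>W. \<Sum>a\<in>nodes. first_phase_count x u t a) \<le> h * m ^ h"
  unfolding first_phase_count_def
  by (rule sum_phase_count_le[OF assms]) (metis translate_inj)

lemma sum_second_phase_count:
  assumes "finite W"
  shows "(\<Sum>t\<in>W. \<Sum>b\<in>nodes. second_phase_count x u t b) \<le> h * m ^ h"
  unfolding second_phase_count_def by (rule sum_phase_count_le[OF assms]) blast

definition departure_window :: "int \<Rightarrow> int set" where
  "departure_window u = {int h * (u div int h - int (2 * m)) ..< int h * (u div int h)}"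

lemma route_edge_departure:
  assumes "a \<in> nodes" "b \<in> nodes" "v \<in> vectors"
    and "(x, u, True) \<in> path_edges (h * m) schedule_perm (route a b t v)"
  shows "t \<in> departure_window u"
proof -
  obtain k w where "k \<le> 1" "u = hop_time k t w (dim u)"
    using route_edge[OF assms] by (metis le_numeral_extra(4) zero_le)
  then have "t \<in> {int h * (u div int h - int (Suc k * m)) ..< int h * (u div int h - int (k * m))}"
    by (intro hop_time_window)
  moreover have "int h * (u div int h - int (2 * m)) \<le> int h * (u div int h - int (Suc k * m))"
    and "int h * (u div int h - int (k * m)) \<le> int h * (u div int h)"
    using \<open>k \<le> 1\<close> by (auto intro!: mult_left_mono simp: le_Suc_eq)
  ultimately show ?thesis
    unfolding departure_window_def by auto
qed

definition window_routes :: "int \<Rightarrow> path set" where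
  "window_routes u = (\<lambda>(a, b, t, v). route a b t v) ` (nodes \<times> nodes \<times> departure_window u \<times> vectors)"

lemma routing_edge_support:
  assumes "a \<in> nodes" "b \<in> nodes" "(x, u, True) \<in> path_edges (h * m) schedule_perm P"
    and "routing a b t P \<noteq> 0"
  shows "t \<in> departure_window u \<and> P \<in> window_routes u"
proof -
  obtain v where v: "v \<in> vectors" "P = route a b t v"
    using assms(4) by (rule routing_nonzero)
  then have "t \<in> departure_window u"
    using route_edge_departure assms(1-3) by blast
  then show ?thesis
    using v assms(1,2) unfolding window_routes_def by force
qed

lemma sum_routing_edge:
  assumes "a \<in> nodes" "b \<in> nodes" "t \<in> departure_window u"
  shows "(\<Sum>P\<in>{P\<in>window_routes u. (x, u, True) \<in> path_edges (h * m) schedule_perm P}. routing a b t P)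
       = real (card {v\<in>vectors. (x, u, True) \<in> path_edges (h * m) schedule_perm (route a b t v)}) / real (m ^ h)"
proof -
  have "finite (window_routes u)"
    unfolding window_routes_def departure_window_def by (simp add: finite_nodes finite_vectors)
  moreover have "{v\<in>vectors. route a b t v \<in> {P\<in>window_routes u. (x, u, True) \<in> path_edges (h * m) schedule_perm P}}
      = {v\<in>vectors. (x, u, True) \<in> path_edges (h * m) schedule_perm (route a b t v)}"
    using assms unfolding window_routes_def by force
  ultimately show ?thesis
    unfolding routing_def by (simp add: sum_uniform_choice finite_vectors card_vectors)
qed

lemma load_routing_le:
  assumes req: "requests_at_most (m ^ h) D r" and "0 \<le> r" "2 * real h * r \<le> 1"
  shows "load (h * m) schedule_perm (m ^ h) routing D (x, u, True) \<le> 1"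
proof -
  let ?W = "departure_window u"
  let ?N = "real (m ^ h)"
  let ?G = "\<lambda>a b t. real (card {v\<in>vectors. (x, u, True) \<in> path_edges (h * m) schedule_perm (route a b t v)}) / ?N"
  have fin: "finite ?W" "finite (window_routes u)"
    unfolding window_routes_def departure_window_def by (simp_all add: finite_nodes finite_vectors)
  have nonneg: "0 \<le> D t a b * routing a b t P" if "a \<in> {1..m ^ h}" "b \<in> {1..m ^ h}" for a b t P
    using req that unfolding requests_at_most_def routing_def uniform_choice_def by simp
  have average: "(\<Sum>t\<in>?W. \<Sum>a\<in>{1..m ^ h}. real (f t a) / ?N) \<le> real h"
    if "(\<Sum>t\<in>?W. \<Sum>a\<in>nodes. f t a) \<le> h * m ^ h" for f
  proof -
    have "(\<Sum>t\<in>?W. \<Sum>a\<in>{1..m ^ h}. real (f t a) / ?N) = real (\<Sum>t\<in>?W. \<Sum>a\<in>nodes. f t a) / ?N"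
      unfolding nodes_def by (simp add: sum_divide_distrib)
    also have "\<dots> \<le> real (h * m ^ h) / ?N"
      using that by (intro divide_right_mono) (simp only: of_nat_le_iff, simp)
    finally show ?thesis
      using m_pos by simp
  qed
  have "load (h * m) schedule_perm (m ^ h) routing D (x, u, True)
      = ennreal (\<Sum>a\<in>{1..m ^ h}. \<Sum>b\<in>{1..m ^ h}. \<Sum>t\<in>?W. D t a b * ?G a b t)"
    using load_eq_sum[OF fin routing_edge_support[unfolded nodes_def] nonneg]
      sum_routing_edge[unfolded nodes_def] by simp
  also have "\<dots> \<le> ennreal (r * ((\<Sum>t\<in>?W. \<Sum>a\<in>{1..m ^ h}. real (first_phase_count x u t a) / ?N)
                              + (\<Sum>t\<in>?W. \<Sum>b\<in>{1..m ^ h}. real (second_phase_count x u t b) / ?N)))"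
  proof (intro ennreal_leI weighted_demand_le[OF req fin(1)])
    fix a b t
    assume "a \<in> {1..m ^ h}" "b \<in> {1..m ^ h}"
    then show "?G a b t \<le> real (first_phase_count x u t a) / ?N + real (second_phase_count x u t b) / ?N"
      using card_route_edge_le[of a b x u t] unfolding nodes_def
      by (simp add: add_divide_distrib[symmetric] divide_right_mono)
  qed simp_all
  also have "\<dots> \<le> ennreal (r * (real h + real h))"
    using average[OF sum_first_phase_count] average[OF sum_second_phase_count] fin(1) assms(2)
    by (intro ennreal_leI mult_left_mono add_mono) simp_all
  also have "\<dots> \<le> 1"
    using assms(3) by (simp add: algebra_simps)
  finally show ?thesis .
qed

lemma good_ORN_torus:
  assumes "0 \<le> r" "2 * real h * r \<le> 1" "real (3 * h * m) \<le> L"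
  shows "good_ORN (m ^ h) r L"
  unfolding good_ORN_def
proof (intro exI conjI)
  show "schedule (m ^ h) (h * m) schedule_perm"
    by (rule schedule_schedule_perm)
  show "routing_scheme (m ^ h) (h * m) schedule_perm routing"
    by (rule routing_scheme_routing)
  show "guarantees_throughput (m ^ h) (h * m) schedule_perm routing r"
    unfolding guarantees_throughput_def using load_routing_le assms(1,2) by blast
  show "max_latency_le (m ^ h) routing L"
    using max_latency_routing assms(3) unfolding max_latency_le_def by fastforce
qed

end

lemma good_ORN_power:
  assumes "0 < h" "0 < m" "0 \<le> r" "2 * real h * r \<le> 1" "real (3 * h * m) \<le> L"
  shows "good_ORN (m ^ h) r L"
proof -
  have "\<exists>node. bij_betw node (PiE {..<h} (\<lambda>_. {..<m})) {1..m ^ h}"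
    by (rule finite_same_card_bij) (simp_all add: finite_PiE card_PiE)
  then obtain node where "bij_betw node (PiE {..<h} (\<lambda>_. {..<m})) {1..m ^ h}"
    by blast
  then interpret torus h m node
    using assms(1,2) by unfold_locales
  show ?thesis
    using assms(3-5) by (rule good_ORN_torus)
qed

lemma scaled_root_power_ge:
  assumes "0 < h" "0 < \<epsilon>" "\<epsilon> \<le> 1"
  shows "\<epsilon> * real m \<le> (\<epsilon> * real (m ^ h)) powr (1 / real h)"
proof -
  have root: "(real m ^ h) powr (1 / real h) = real m"
  proof (cases "m = 0")
    case False
    then have "real m ^ h = real m powr real h"
      by (simp add: powr_realpow)
    then show ?thesis
      using assms(1) by (simp add: powr_powr)
  qed (use assms(1) in simp)
  have "\<epsilon> = \<epsilon> powr 1"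
    using assms(2) by simp
  also have "\<dots> \<le> \<epsilon> powr (1 / real h)"
    using assms by (intro powr_mono') auto
  finally have "\<epsilon> * real m \<le> \<epsilon> powr (1 / real h) * (real m ^ h) powr (1 / real h)"
    unfolding root by (simp add: mult_right_mono)
  also have "\<dots> = (\<epsilon> * real (m ^ h)) powr (1 / real h)"
    using assms(2) by (simp add: powr_mult)
  finally show ?thesis .
qed

lemma Lstar_parameters:
  assumes "0 < r" "r \<le> 1 / 2"
  defines "h \<equiv> nat \<lfloor>1 / (2 * r)\<rfloor>" and "\<epsilon> \<equiv> of_int \<lfloor>1 / (2 * r)\<rfloor> + 1 - 1 / (2 * r)"
  shows "0 < h" and "2 * real h * r \<le> 1" and "0 < \<epsilon>" and "\<epsilon> \<le> 1"
    and "Lstar r N = real h * (real N powr (1 / (real h + 1)) + (\<epsilon> * real N) powr (1 / real h))"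
proof -
  have "1 \<le> 1 / (2 * r)"
    using assms(1,2) by (simp add: field_simps)
  then have floor: "1 \<le> \<lfloor>1 / (2 * r)\<rfloor>"
    by (simp add: le_floor_iff)
  show "0 < h"
    unfolding h_def using floor by simp
  have h: "real h = of_int \<lfloor>1 / (2 * r)\<rfloor>"
    unfolding h_def using of_nat_nat[OF order.trans[OF zero_le_one floor]] by simp
  then have "real h \<le> 1 / (2 * r)" "1 / (2 * r) < real h + 1"
    by simp_all
  then show "0 < \<epsilon>" "\<epsilon> \<le> 1" "2 * real h * r \<le> 1"
    unfolding \<epsilon>_def h[symmetric] using assms(1) by (simp_all add: field_simps)
  show "Lstar r N = real h * (real N powr (1 / (real h + 1)) + (\<epsilon> * real N) powr (1 / real h))"
    unfolding Lstar_def Let_def \<epsilon>_def h ..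
qed

lemma good_ORN_Lstar:
  assumes "0 < r" "r \<le> 1 / 2" "0 < m"
  defines "h \<equiv> nat \<lfloor>1 / (2 * r)\<rfloor>" and "\<epsilon> \<equiv> of_int \<lfloor>1 / (2 * r)\<rfloor> + 1 - 1 / (2 * r)"
  shows "good_ORN (m ^ h) r (3 / \<epsilon> * Lstar r (m ^ h))"
proof -
  note par = Lstar_parameters[OF assms(1,2), folded h_def, folded \<epsilon>_def]
  have "real h * (\<epsilon> * real m) \<le> Lstar r (m ^ h)"
    unfolding par(5) using scaled_root_power_ge[OF par(1,3,4)]
    by (intro mult_left_mono) (auto intro: add_increasing)
  then have "real (3 * h * m) \<le> 3 / \<epsilon> * Lstar r (m ^ h)"
    using par(3) by (simp add: field_simps)
  then show ?thesis
    using par(1,2) assms(1,3) by (intro good_ORN_power) simp_all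
qed

theorem theorem4:
  fixes r :: real
  assumes "0 < r" and "r \<le> 1 / 2"
  shows "\<exists>C > 0. infinite {N :: nat. good_ORN N r (C * Lstar r N)}"
proof -
  define h where "h = nat \<lfloor>1 / (2 * r)\<rfloor>"
  define \<epsilon> where "\<epsilon> = of_int \<lfloor>1 / (2 * r)\<rfloor> + 1 - 1 / (2 * r)"
  note par = Lstar_parameters[OF assms, folded h_def, folded \<epsilon>_def]
  have "infinite {N :: nat. good_ORN N r (3 / \<epsilon> * Lstar r N)}"
    unfolding infinite_nat_iff_unbounded_le
  proof
    fix M :: nat
    have "M + 1 \<le> (M + 1) ^ h"
      using par(1) by (intro self_le_power) simp_all
    then show "\<exists>N\<ge>M. N \<in> {N. good_ORN N r (3 / \<epsilon> * Lstar r N)}"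
      using good_ORN_Lstar[OF assms, of "M + 1", folded h_def, folded \<epsilon>_def]
      by (intro exI[of _ "(M + 1) ^ h"]) auto
  qed
  moreover have "0 < 3 / \<epsilon>"
    using par(3) by simp
  ultimately show ?thesis
    by blast
qed

end
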